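(* Let $A$ be an integral domain containing $\mathbb{Q}$ and let $D$ be a locally nilpotent derivation of $A$. Let $a,b,\lambda\in A$ and $\mu\in\ker D$, all nonzero, and suppose $\lambda\, a\, D(b)=\mu\, b\, D(a)$. Then either $D(a)=D(b)=0$, or $\lambda\mu^{-1}$ (an element of the fraction field of $A$) is a positive rational number.
   Context: A derivation $D$ of $A$ is an additive map satisfying $D(ab)=aD(b)+D(a)b$; it is locally nilpotent if for every $a\in A$ there is $n$ with $D^n(a)=0$. $\ker D=\{a\in A: D(a)=0\}$. *)

theory Defs
  imports Main
begin

definition derivation :: "('a::comm_ring_1 \<Rightarrow> 'a) \<Rightarrow> bool" where
  "derivation D \<longleftrightarrow> (\<forall>x y. D (x + y) = D x + D y) \<and> (\<forall>x y. D (x * y) = x * D y + D x * y)"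

definition locally_nilpotent :: "('a::comm_ring_1 \<Rightarrow> 'a) \<Rightarrow> bool" where
  "locally_nilpotent D \<longleftrightarrow> (\<forall>a. \<exists>n. (D ^^ n) a = 0)"

definition lnd :: "('a::comm_ring_1 \<Rightarrow> 'a) \<Rightarrow> bool" where
  "lnd D \<longleftrightarrow> derivation D \<and> locally_nilpotent D"

definition ker :: "('a::comm_ring_1 \<Rightarrow> 'a) \<Rightarrow> 'a set" where
  "ker D = {a. D a = 0}"

end

theory Submission
  imports Defs
begin

text \<open>
  For a locally nilpotent derivation D of a domain of characteristic 0,
  every nonzero x has a degree: the largest n with D^n x \<noteq> 0.  The general
  Leibniz rule shows that degrees add under multiplication, the leading term of a
  product being a binomial coefficient times the product of the leading terms, and
  D lowers the degree of a non-constant element by one.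

  Given l a D(b) = m b D(a) with D a, D b \<noteq> 0 of degrees p, q \<ge> 1 and D m = 0,
  comparing degrees of both sides gives deg l + p + q - 1 = p + q - 1, so D l = 0.
  Applying D^N with N = p + q - 1 to both sides and using that l, m are constants
  then yields  (N choose p) l = (N choose q) m,  two positive integers.
\<close>

text \<open>The Pascal-triangle recombination used in the inductive step of the Leibniz rule.\<close>
lemma binomial_convolution_Suc:
  fixes A B :: "nat \<Rightarrow> 'a::comm_semiring_1"
  shows "(\<Sum>k\<le>n. of_nat (n choose k) * (A k * B (Suc (n-k)) + A (Suc k) * B (n-k)))
       = (\<Sum>k\<le>Suc n. of_nat (Suc n choose k) * A k * B (Suc n - k))"
proof -
  have shift: "(\<Sum>k\<le>n. of_nat (n choose k) * A k * B (Suc (n-k)))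
       = A 0 * B (Suc n) + (\<Sum>i\<le>n. of_nat (n choose Suc i) * A (Suc i) * B (n - i))"
  proof -
    have "(\<Sum>k\<le>n. of_nat (n choose k) * A k * B (Suc (n-k)))
        = (\<Sum>k\<le>Suc n. of_nat (n choose k) * A k * B (Suc (n-k)))"
      by (simp add: binomial_eq_0)
    also have "\<dots> = A 0 * B (Suc n)
        + (\<Sum>i\<le>n. of_nat (n choose Suc i) * A (Suc i) * B (Suc (n - Suc i)))"
      by (subst sum.atMost_Suc_shift) simp
    also have "(\<Sum>i\<le>n. of_nat (n choose Suc i) * A (Suc i) * B (Suc (n - Suc i)))
        = (\<Sum>i\<le>n. of_nat (n choose Suc i) * A (Suc i) * B (n - i))"
      by (rule sum.cong) (auto simp: Suc_diff_Suc binomial_eq_0 le_less)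
    finally show ?thesis .
  qed
  have "(\<Sum>k\<le>Suc n. of_nat (Suc n choose k) * A k * B (Suc n - k))
     = A 0 * B (Suc n) + (\<Sum>i\<le>n. of_nat (n choose i) * A (Suc i) * B (n - i))
       + (\<Sum>i\<le>n. of_nat (n choose Suc i) * A (Suc i) * B (n - i))"
    by (subst sum.atMost_Suc_shift) (simp add: sum.distrib algebra_simps)
  with shift show ?thesis
    by (simp add: sum.distrib algebra_simps)
qed

context
  fixes D :: "'a::comm_ring_1 \<Rightarrow> 'a"
  assumes der: "derivation D"
begin

lemma derivation_add: "D (x + y) = D x + D y"
  using der by (simp add: derivation_def)

lemma derivation_mult: "D (x * y) = x * D y + D x * y"
  using der by (simp add: derivation_def)

lemma derivation_zero: "D 0 = 0"
  using derivation_add[of 0 0] by (metis add.right_neutral add_left_cancel)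

lemma derivation_sum: "D (sum f A) = (\<Sum>a\<in>A. D (f a))"
  by (induction A rule: infinite_finite_induct) (auto simp: derivation_zero derivation_add)

lemma derivation_of_nat_mult: "D (of_nat c * z) = of_nat c * D z"
  by (induction c) (auto simp: derivation_zero derivation_add algebra_simps)

lemma derivation_iter_zero: "(D ^^ n) 0 = 0"
  by (induction n) (auto simp: derivation_zero)

lemma derivation_iter_mult:
  "(D ^^ n) (x * y) = (\<Sum>k\<le>n. of_nat (n choose k) * (D ^^ k) x * (D ^^ (n - k)) y)"
proof (induction n)
  case 0
  then show ?case by simp
next
  case (Suc n)
  have "(D ^^ Suc n) (x * y) = (\<Sum>k\<le>n. of_nat (n choose k) * D ((D ^^ k) x * (D ^^ (n - k)) y))"
    by (simp add: Suc derivation_sum derivation_of_nat_mult mult.assoc)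
  also have "\<dots> = (\<Sum>k\<le>n. of_nat (n choose k) * ((\<lambda>k. (D ^^ k) x) k * (\<lambda>k. (D ^^ k) y) (Suc (n-k))
      + (\<lambda>k. (D ^^ k) x) (Suc k) * (\<lambda>k. (D ^^ k) y) (n-k)))"
    by (simp add: derivation_mult)
  also have "\<dots> = (\<Sum>k\<le>Suc n. of_nat (Suc n choose k) * (D ^^ k) x * (D ^^ (Suc n - k)) y)"
    by (rule binomial_convolution_Suc)
  finally show ?case .
qed

lemma derivation_iter_kernel_mult:
  assumes "D c = 0" shows "(D ^^ n) (c * z) = c * (D ^^ n) z"
  by (induction n) (auto simp: derivation_mult assms)

end

definition has_degree :: "('a::comm_ring_1 \<Rightarrow> 'a) \<Rightarrow> 'a \<Rightarrow> nat \<Rightarrow> bool" where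
  "has_degree D x n \<longleftrightarrow> (D ^^ n) x \<noteq> 0 \<and> (D ^^ Suc n) x = 0"

context
  fixes D :: "'a::idom \<Rightarrow> 'a"
  assumes der: "derivation D"
begin

lemma has_degree_iter_vanish:
  assumes "has_degree D x n" "k > n" shows "(D ^^ k) x = 0"
proof -
  have "(D ^^ k) x = (D ^^ (k - Suc n)) ((D ^^ Suc n) x)"
    using assms(2) by (metis Suc_leI funpow_add le_add_diff_inverse2 o_apply)
  then show ?thesis
    using assms(1) derivation_iter_zero[OF der] by (simp add: has_degree_def)
qed

lemma has_degree_unique:
  assumes "has_degree D x n" "has_degree D x n'" shows "n = n'"
  using assms has_degree_iter_vanish unfolding has_degree_def
  by (metis linorder_neqE_nat)

lemma has_degree_exists:
  assumes "locally_nilpotent D" "x \<noteq> 0" shows "\<exists>n. has_degree D x n"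
proof -
  obtain m where "(D ^^ m) x = 0"
    using assms(1) unfolding locally_nilpotent_def by blast
  define k where "k = (LEAST m. (D ^^ m) x = 0)"
  have k: "(D ^^ k) x = 0"
    unfolding k_def using \<open>(D ^^ m) x = 0\<close> by (rule LeastI)
  with assms(2) obtain n where n: "k = Suc n"
    by (cases k) auto
  have "(D ^^ n) x \<noteq> 0"
    using n not_less_Least[of n "\<lambda>m. (D ^^ m) x = 0"] unfolding k_def by simp
  with k n show ?thesis
    unfolding has_degree_def by blast
qed

lemma has_degree_derivative:
  assumes "has_degree D x (Suc p)" shows "has_degree D (D x) p"
  using assms unfolding has_degree_def by (simp add: funpow_Suc_right del: funpow.simps)

lemma has_degree_pos_iff:
  assumes "has_degree D x p" shows "p > 0 \<longleftrightarrow> D x \<noteq> 0"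
proof (cases p)
  case 0
  then show ?thesis using assms by (simp add: has_degree_def)
next
  case (Suc n)
  have "(D ^^ n) (D x) \<noteq> 0"
    using assms Suc by (simp add: has_degree_def funpow_Suc_right del: funpow.simps)
  then show ?thesis
    using Suc derivation_iter_zero[OF der] by auto
qed

text \<open>The leading term of a product: only the term k = p survives in the Leibniz sum.\<close>
lemma has_degree_mult_leading:
  assumes hx: "has_degree D x p" and hy: "has_degree D y q"
  shows "(D ^^ (p + q)) (x * y) = of_nat ((p + q) choose p) * (D ^^ p) x * (D ^^ q) y"
proof -
  have "(D ^^ (p + q)) (x * y)
      = (\<Sum>k\<le>p+q. of_nat ((p+q) choose k) * (D ^^ k) x * (D ^^ (p+q - k)) y)"
    by (rule derivation_iter_mult[OF der])
  also have "\<dots> = (\<Sum>k\<in>{p}. of_nat ((p+q) choose k) * (D ^^ k) x * (D ^^ (p+q - k)) y)"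
  proof (rule sum.mono_neutral_right)
    show "\<forall>i\<in>{..p + q} - {p}. of_nat (p + q choose i) * (D ^^ i) x * (D ^^ (p + q - i)) y = 0"
    proof
      fix i assume "i \<in> {..p + q} - {p}"
      then have "i > p \<or> p + q - i > q" by auto
      then show "of_nat (p + q choose i) * (D ^^ i) x * (D ^^ (p + q - i)) y = 0"
        using has_degree_iter_vanish[OF hx] has_degree_iter_vanish[OF hy] by auto
    qed
  qed auto
  finally show ?thesis by simp
qed

lemma has_degree_mult:
  assumes char0: "\<And>c::nat. c > 0 \<Longrightarrow> (of_nat c :: 'a) \<noteq> 0"
    and hx: "has_degree D x p" and hy: "has_degree D y q"
  shows "has_degree D (x * y) (p + q)"
proof -
  have "(D ^^ Suc (p + q)) (x * y)
      = (\<Sum>k\<le>Suc (p+q). of_nat (Suc (p+q) choose k) * (D ^^ k) x * (D ^^ (Suc (p+q) - k)) y)"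
    by (rule derivation_iter_mult[OF der])
  also have "\<dots> = 0"
  proof (rule sum.neutral, rule ballI)
    fix i assume "i \<in> {..Suc (p + q)}"
    then have "i > p \<or> Suc (p + q) - i > q" by auto
    then show "of_nat (Suc (p + q) choose i) * (D ^^ i) x * (D ^^ (Suc (p + q) - i)) y = 0"
      using has_degree_iter_vanish[OF hx] has_degree_iter_vanish[OF hy] by auto
  qed
  finally have "(D ^^ Suc (p + q)) (x * y) = 0" .
  moreover have "(D ^^ (p + q)) (x * y) \<noteq> 0"
    using has_degree_mult_leading[OF hx hy] hx hy char0[of "(p + q) choose p"]
    unfolding has_degree_def by simp
  ultimately show ?thesis
    unfolding has_degree_def by blast
qed

text \<open>
  First half of the argument: if l a D(b) = m b D(a) with D m = 0 and D a, D b \<noteq> 0,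
  comparing the degrees of both sides forces l to be a constant.
\<close>
lemma proportional_derivatives_kernel:
  assumes char0: "\<And>c::nat. c > 0 \<Longrightarrow> (of_nat c :: 'a) \<noteq> 0"
    and lnil: "locally_nilpotent D"
    and ha: "has_degree D a (Suc p)" and hb: "has_degree D b (Suc q)"
    and l: "l \<noteq> 0" and m: "m \<noteq> 0" "D m = 0"
    and eq: "l * a * D b = m * b * D a"
  shows "D l = 0"
proof -
  obtain r where hl: "has_degree D l r"
    using has_degree_exists[OF lnil l] by blast
  have hm: "has_degree D m 0"
    using m by (simp add: has_degree_def)
  have "has_degree D (l * a * D b) (r + Suc p + q)"
    using has_degree_mult[OF char0 has_degree_mult[OF char0 hl ha] has_degree_derivative[OF hb]] .
  moreover have "has_degree D (l * a * D b) (0 + Suc q + p)"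
    using has_degree_mult[OF char0 has_degree_mult[OF char0 hm hb] has_degree_derivative[OF ha]]
    unfolding eq .
  ultimately have "r = 0"
    using has_degree_unique by fastforce
  with hl show ?thesis
    by (simp add: has_degree_def)
qed

text \<open>
  Second half: once l and m are constants, applying D^N with N = deg a + deg b - 1 to both sides
  and comparing leading terms gives an integral proportionality between l and m.
\<close>
lemma proportional_derivatives_ratio:
  assumes ha: "has_degree D a (Suc p)" and hb: "has_degree D b (Suc q)"
    and kl: "D l = 0" and km: "D m = 0"
    and eq: "l * a * D b = m * b * D a"
  shows "of_nat ((Suc p + q) choose Suc p) * l = of_nat ((Suc p + q) choose Suc q) * m"
proof -
  define N where "N = Suc p + q"
  let ?lead = "(D ^^ Suc p) a * (D ^^ Suc q) b"
  have lead_a: "(D ^^ N) (a * D b) = of_nat (N choose Suc p) * ?lead"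
    using has_degree_mult_leading[OF ha has_degree_derivative[OF hb]] unfolding N_def
    by (simp add: funpow_Suc_right mult.assoc del: funpow.simps)
  have lead_b: "(D ^^ N) (b * D a) = of_nat (N choose Suc q) * ?lead"
    using has_degree_mult_leading[OF hb has_degree_derivative[OF ha]] unfolding N_def
    by (simp add: funpow_Suc_right add.commute mult_ac del: funpow.simps)
  have "(D ^^ N) (l * (a * D b)) = (D ^^ N) (m * (b * D a))"
    using eq by (simp add: mult.assoc)
  then have "(of_nat (N choose Suc p) * l) * ?lead = (of_nat (N choose Suc q) * m) * ?lead"
    unfolding derivation_iter_kernel_mult[OF der kl] derivation_iter_kernel_mult[OF der km]
      lead_a lead_b by (simp add: mult_ac)
  moreover have "?lead \<noteq> 0"
    using ha hb by (simp add: has_degree_def)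
  ultimately show ?thesis
    unfolding N_def by simp
qed

end

theorem corollary3p4:
  fixes D :: "'a::idom \<Rightarrow> 'a" and a b l m :: 'a
  assumes contains_Q: "\<And>n::nat. n > 0 \<Longrightarrow> \<exists>y::'a. of_nat n * y = 1"
    and D: "lnd D"
    and nz: "a \<noteq> 0" "b \<noteq> 0" "l \<noteq> 0" "m \<noteq> 0"
    and m_ker: "m \<in> ker D"
    and eq: "l * a * D b = m * b * D a"
  shows "(D a = 0 \<and> D b = 0) \<or>
         (\<exists>p q :: nat. p > 0 \<and> q > 0 \<and> of_nat q * l = of_nat p * m)"
proof (cases "D a = 0 \<and> D b = 0")
  case False
  have der: "derivation D" and lnil: "locally_nilpotent D"
    using D by (auto simp: lnd_def)
  have char0: "(of_nat c :: 'a) \<noteq> 0" if "c > 0" for c :: nat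
    using contains_Q[OF that] by force
  have Dm: "D m = 0"
    using m_ker by (simp add: ker_def)
  have "D a \<noteq> 0" "D b \<noteq> 0"
    using False eq nz by auto
  moreover obtain p q where ha: "has_degree D a p" and hb: "has_degree D b q"
    using has_degree_exists[OF der lnil] nz by metis
  ultimately obtain p' q' where p: "p = Suc p'" and q: "q = Suc q'"
    using has_degree_pos_iff[OF der] gr0_implies_Suc by metis
  have Dl: "D l = 0"
    using proportional_derivatives_kernel[OF der char0 lnil ha[unfolded p] hb[unfolded q]] nz Dm eq
    by blast
  show ?thesis
    using proportional_derivatives_ratio[OF der ha[unfolded p] hb[unfolded q] Dl Dm eq]
    by (intro disjI2 exI[of _ "Suc p' + q' choose Suc q'"] exI[of _ "Suc p' + q' choose Suc p'"])
      auto
qed simp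

end
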